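(* Consider a SOCO problem with decision space $F=[x_L,x_H]$ and a sequence of discrete systems, indexed by $i$, whose state spacings $\delta_i$ tend to $0$ and each of which has $[x_1,x_m]=F$. Let $x_i=(x_i^t)_t$ denote the output of DRBG($N$) in the $i$-th discrete system and $\hat x=(\hat x^t)_t$ the output of RBG($N$) in the continuous system, all using the same random number $r$. Then with probability $1$, for all $t$, $\lim_{i\to\infty}|x_i^t-\hat x^t|=0$.
   Context: $F=[x_L,x_H]\subseteq\mathbb{R}^+$; $\|\cdot\|$ a norm on $\mathbb{R}$; $\theta\ge1$, $N(\cdot)=\theta\|\cdot\|$; cost functions $c^t:F\to\mathbb{R}^+$ convex (finite on $F$) with uniformly bounded subgradients. A discrete system is a set of states $M=\{x_1<\dots<x_m\}\subseteq F$ with equal spacing $\delta=x_{k+1}-x_k$, $x_1=x_L$, $x_m=x_H$, using the restrictions of $c^t$ to $M$. RBG($N$): $w^0(x)=N(x)$, $w^t(x)=\min_{y\in F}\{w^{t-1}(y)+c^t(y)+N(x-y)\}$, draw $r$ uniformly from $(-1,1)$, and at time $t$ choose $x^t\in F$ minimizing $Y^t(x)=w^{t-1}(x)+rN(x)$. DRBG($N$) is identical with $F$ replaced by $M$ both in the work function minimization and in the choice of $x^t$. Probability is over $r$. *)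

theory Defs
  imports "HOL-Analysis.Analysis" "HOL-Probability.Probability"
begin

definition is_real_norm :: "(real \<Rightarrow> real) \<Rightarrow> bool" where
  "is_real_norm nrm \<longleftrightarrow>
     (\<forall>x. 0 \<le> nrm x) \<and> (\<forall>x. nrm x = 0 \<longleftrightarrow> x = 0) \<and>
     (\<forall>a x. nrm (a * x) = \<bar>a\<bar> * nrm x) \<and>
     (\<forall>x y. nrm (x + y) \<le> nrm x + nrm y)"

definition unif_bounded_subgrad :: "(nat \<Rightarrow> real \<Rightarrow> real) \<Rightarrow> real set \<Rightarrow> bool" where
  "unif_bounded_subgrad c F \<longleftrightarrow>
     (\<exists>G. \<forall>t. \<forall>x\<in>F. \<exists>g. \<bar>g\<bar> \<le> G \<and> (\<forall>y\<in>F. c t y \<ge> c t x + g * (y - x)))"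

definition grid_spacing :: "real \<Rightarrow> real \<Rightarrow> nat \<Rightarrow> real" where
  "grid_spacing xL xH m = (xH - xL) / (real m - 1)"

definition grid :: "real \<Rightarrow> real \<Rightarrow> nat \<Rightarrow> real set" where
  "grid xL xH m = (\<lambda>k. xL + real k * grid_spacing xL xH m) ` {..<m}"

text \<open>Work function over a state set S (S = F for RBG, S = M for DRBG).\<close>
fun work :: "(real \<Rightarrow> real) \<Rightarrow> (nat \<Rightarrow> real \<Rightarrow> real) \<Rightarrow> real set \<Rightarrow> nat \<Rightarrow> real \<Rightarrow> real" where
  "work N c S 0 x = N x"
| "work N c S (Suc t) x = (INF y\<in>S. work N c S t y + c (Suc t) y + N (x - y))"

definition rbg_choice :: "(real \<Rightarrow> real) \<Rightarrow> (nat \<Rightarrow> real \<Rightarrow> real) \<Rightarrow> real set \<Rightarrow> real \<Rightarrow> nat \<Rightarrow> real \<Rightarrow> bool" where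
  "rbg_choice N c S r t x \<longleftrightarrow>
     x \<in> S \<and> (\<forall>y\<in>S. work N c S (t - 1) x + r * N x \<le> work N c S (t - 1) y + r * N y)"

end

theory Submission
  imports Defs
begin

text \<open>
  Write \<open>N z = K \<bar>z\<bar>\<close> and \<open>Y\<^sub>S(x) = w\<^sub>S(x) + r N(x)\<close> for the objective of (D)RBG on a state set \<open>S\<close>.
  The work function is \<open>K\<close>-Lipschitz, and restricting its minimisations from \<open>F\<close> to a
  \<open>\<delta>\<close>-dense grid perturbs it by \<open>O(t \<delta>)\<close>, because the costs are Lipschitz (bounded
  subgradients). Hence the grid choices are \<open>O(\<delta>)\<close>-minimisers of the continuous
  objective \<open>Y\<^sub>F\<close>, and near-minimisers of a continuous function on a compact interval converge
  to its minimiser as long as that minimiser is unique. Uniqueness fails only for countably many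
  \<open>r\<close>: on \<open>F \<subseteq> [0,\<infinity>)\<close> the minimisers of \<open>Y\<^sub>F\<close> move monotonically (downwards) as \<open>r\<close>
  grows, so the values of \<open>r\<close> with two minimisers index disjoint open intervals.
\<close>

lemma real_norm_eq_abs_mult:
  assumes "is_real_norm nrm"
  shows "nrm x = \<bar>x\<bar> * nrm 1"
  using assms unfolding is_real_norm_def by (metis mult.right_neutral)

lemma real_norm_one_pos:
  assumes "is_real_norm nrm"
  shows "0 < nrm 1"
  using assms unfolding is_real_norm_def by (metis less_eq_real_def zero_neq_one)

lemma unif_bounded_subgrad_lipschitz:
  assumes "unif_bounded_subgrad c F" and "F \<noteq> {}"
  obtains G where "0 \<le> G" and "\<And>t x y. x \<in> F \<Longrightarrow> y \<in> F \<Longrightarrow> \<bar>c t x - c t y\<bar> \<le> G * \<bar>x - y\<bar>"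
proof -
  obtain G where G: "\<And>t x. x \<in> F \<Longrightarrow> \<exists>g. \<bar>g\<bar> \<le> G \<and> (\<forall>y\<in>F. c t x + g * (y - x) \<le> c t y)"
    using assms(1) unfolding unif_bounded_subgrad_def by blast
  have one_sided: "c t x - c t y \<le> G * \<bar>x - y\<bar>" if "x \<in> F" "y \<in> F" for t x y
  proof -
    obtain g where g: "\<bar>g\<bar> \<le> G" "c t x + g * (y - x) \<le> c t y"
      using G[OF \<open>x \<in> F\<close>, of t] \<open>y \<in> F\<close> by blast
    have "c t x - c t y \<le> g * (x - y)" using g(2) by (simp add: algebra_simps)
    also have "\<dots> \<le> \<bar>g\<bar> * \<bar>x - y\<bar>" by (metis abs_ge_self abs_mult)
    also have "\<dots> \<le> G * \<bar>x - y\<bar>" using g(1) by (rule mult_right_mono) simp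
    finally show ?thesis .
  qed
  show thesis
  proof
    obtain x where "x \<in> F" using assms(2) by blast
    then show "0 \<le> G" using G[of x] by force
    show "\<bar>c t x - c t y\<bar> \<le> G * \<bar>x - y\<bar>" if "x \<in> F" "y \<in> F" for t x y
      using one_sided[OF that, of t] one_sided[OF that(2,1), of t] by (auto simp: abs_minus_commute)
  qed
qed

lemma work_nonneg:
  assumes "0 \<le> K" and "\<And>t x. x \<in> S \<Longrightarrow> 0 \<le> c t x" and "S \<noteq> {}"
  shows "0 \<le> work (\<lambda>z. K * \<bar>z\<bar>) c S s x"
proof (induction s arbitrary: x)
  case 0
  show ?case using assms(1) by simp
next
  case (Suc s)
  show ?case
    using assms Suc.IH by (auto intro!: cINF_greatest add_nonneg_nonneg)
qed

lemma work_Suc_le: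
  assumes "0 \<le> K" and "\<And>t x. x \<in> S \<Longrightarrow> 0 \<le> c t x" and "y \<in> S"
  shows "work (\<lambda>z. K * \<bar>z\<bar>) c S (Suc s) x
           \<le> work (\<lambda>z. K * \<bar>z\<bar>) c S s y + c (Suc s) y + K * \<bar>x - y\<bar>"
proof -
  have "bdd_below ((\<lambda>y. work (\<lambda>z. K * \<bar>z\<bar>) c S s y + c (Suc s) y + K * \<bar>x - y\<bar>) ` S)"
    using assms work_nonneg[where c=c and S=S, OF assms(1,2)]
    by (intro bdd_belowI2[where m=0] add_nonneg_nonneg) auto
  from cINF_lower[OF this assms(3)] show ?thesis by simp
qed

lemma work_lipschitz:
  assumes "0 \<le> K" and "\<And>t x. x \<in> S \<Longrightarrow> 0 \<le> c t x" and "S \<noteq> {}"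
  shows "work (\<lambda>z. K * \<bar>z\<bar>) c S s x \<le> work (\<lambda>z. K * \<bar>z\<bar>) c S s x' + K * \<bar>x - x'\<bar>"
proof (cases s)
  case 0
  have "K * \<bar>x\<bar> \<le> K * (\<bar>x'\<bar> + \<bar>x - x'\<bar>)" using assms(1) by (intro mult_left_mono) auto
  then show ?thesis using 0 by (simp add: algebra_simps)
next
  case (Suc s)
  have "work (\<lambda>z. K * \<bar>z\<bar>) c S (Suc s) x - K * \<bar>x - x'\<bar>
          \<le> work (\<lambda>z. K * \<bar>z\<bar>) c S s y + c (Suc s) y + K * \<bar>x' - y\<bar>" if "y \<in> S" for y
  proof -
    have "K * \<bar>x - y\<bar> \<le> K * (\<bar>x' - y\<bar> + \<bar>x - x'\<bar>)" using assms(1) by (intro mult_left_mono) auto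
    then show ?thesis
      using work_Suc_le[where c=c and S=S and s=s and x=x, OF assms(1,2) that]
      by (simp add: algebra_simps)
  qed
  then have "work (\<lambda>z. K * \<bar>z\<bar>) c S (Suc s) x - K * \<bar>x - x'\<bar> \<le> work (\<lambda>z. K * \<bar>z\<bar>) c S (Suc s) x'"
    using assms(3) by (simp add: cINF_greatest)
  then show ?thesis using Suc by simp
qed

lemma work_continuous_on:
  assumes "0 \<le> K" and "\<And>t x. x \<in> S \<Longrightarrow> 0 \<le> c t x" and "S \<noteq> {}"
  shows "continuous_on A (work (\<lambda>z. K * \<bar>z\<bar>) c S s)"
proof (rule lipschitz_on_continuous_on[of K], rule lipschitz_onI)
  show "dist (work (\<lambda>z. K * \<bar>z\<bar>) c S s x) (work (\<lambda>z. K * \<bar>z\<bar>) c S s y) \<le> K * dist x y" for x y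
    using work_lipschitz[where c=c and S=S and s=s, OF assms] by (smt (verit) dist_real_def)
qed (fact assms(1))

lemma work_dense_subset_approx:
  assumes K: "0 \<le> K" and G: "0 \<le> G"
    and c_nonneg: "\<And>t x. x \<in> F \<Longrightarrow> 0 \<le> c t x"
    and c_lipschitz: "\<And>t x y. x \<in> F \<Longrightarrow> y \<in> F \<Longrightarrow> \<bar>c t x - c t y\<bar> \<le> G * \<bar>x - y\<bar>"
    and SF: "S \<subseteq> F" and S: "S \<noteq> {}"
    and dense: "\<And>y. y \<in> F \<Longrightarrow> \<exists>y'\<in>S. \<bar>y - y'\<bar> \<le> \<delta>"
  shows "\<bar>work (\<lambda>z. K * \<bar>z\<bar>) c S s x - work (\<lambda>z. K * \<bar>z\<bar>) c F s x\<bar> \<le> real s * (2*K + G) * \<delta>"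
proof (induction s arbitrary: x)
  case 0
  show ?case by simp
next
  case (Suc s)
  let ?WS = "work (\<lambda>z. K * \<bar>z\<bar>) c S" and ?WF = "work (\<lambda>z. K * \<bar>z\<bar>) c F"
  let ?D = "real s * (2*K + G) * \<delta>"
  have F: "F \<noteq> {}" using S SF by blast
  have c_nonneg_S: "\<And>t x. x \<in> S \<Longrightarrow> 0 \<le> c t x" using c_nonneg SF by blast
  have \<delta>: "0 \<le> \<delta>" using dense S SF by force
  have "?WF (Suc s) x - ?D \<le> ?WS s y + c (Suc s) y + K * \<bar>x - y\<bar>" if "y \<in> S" for y
    using work_Suc_le[where c=c and S=F and s=s and x=x, OF K c_nonneg] that SF Suc.IH[of y]
    by (force simp: abs_le_iff)
  then have lower: "?WF (Suc s) x - ?D \<le> ?WS (Suc s) x"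
    using S by (simp add: cINF_greatest)
  have "?WS (Suc s) x - ?D - (2*K + G) * \<delta> \<le> ?WF s y + c (Suc s) y + K * \<bar>x - y\<bar>"
    if y: "y \<in> F" for y
  proof -
    obtain y' where y': "y' \<in> S" "\<bar>y - y'\<bar> \<le> \<delta>" using dense[OF y] by blast
    have "?WS (Suc s) x \<le> ?WS s y' + c (Suc s) y' + K * \<bar>x - y'\<bar>"
      by (rule work_Suc_le[OF K c_nonneg_S y'(1)])
    also have "\<dots> \<le> ?WF s y' + ?D + c (Suc s) y' + K * \<bar>x - y'\<bar>"
      using Suc.IH[of y'] by (simp add: abs_le_iff)
    also have "\<dots> \<le> ?WF s y + ?D + c (Suc s) y + K * \<bar>x - y\<bar> + (2*K + G) * \<bar>y - y'\<bar>"
    proof -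
      have "?WF s y' \<le> ?WF s y + K * \<bar>y - y'\<bar>"
        using work_lipschitz[where c=c and S=F and s=s and x=y' and x'=y, OF K c_nonneg F]
        by (simp add: abs_minus_commute)
      moreover have "c (Suc s) y' \<le> c (Suc s) y + G * \<bar>y - y'\<bar>"
        using c_lipschitz[of y' y "Suc s"] y y'(1) SF by (auto simp: abs_le_iff abs_minus_commute)
      moreover have "K * \<bar>x - y'\<bar> \<le> K * (\<bar>x - y\<bar> + \<bar>y - y'\<bar>)" using K by (intro mult_left_mono) auto
      ultimately show ?thesis by (simp add: algebra_simps)
    qed
    also have "\<dots> \<le> ?WF s y + ?D + c (Suc s) y + K * \<bar>x - y\<bar> + (2*K + G) * \<delta>"
      using y'(2) K G by (intro add_left_mono mult_left_mono) auto
    finally show ?thesis by simp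
  qed
  then have upper: "?WS (Suc s) x - ?D - (2*K + G) * \<delta> \<le> ?WF (Suc s) x"
    using F by (simp add: cINF_greatest)
  have "real (Suc s) * (2*K + G) * \<delta> = ?D + (2*K + G) * \<delta>" by (simp add: algebra_simps)
  moreover have "0 \<le> (2*K + G) * \<delta>" using K G \<delta> by simp
  ultimately show ?case using lower upper by (simp add: abs_le_iff)
qed

lemma mult_abs_diff_le:
  fixes r K a b :: real
  assumes "0 \<le> K"
  shows "r * (K * \<bar>a\<bar>) - r * (K * \<bar>b\<bar>) \<le> \<bar>r\<bar> * K * \<bar>a - b\<bar>"
proof -
  have "r * (K * \<bar>a\<bar>) - r * (K * \<bar>b\<bar>) = r * K * (\<bar>a\<bar> - \<bar>b\<bar>)" by (simp add: algebra_simps)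
  also have "\<dots> \<le> \<bar>r\<bar> * K * \<bar>\<bar>a\<bar> - \<bar>b\<bar>\<bar>"
    using assms abs_ge_self[of "r * K * (\<bar>a\<bar> - \<bar>b\<bar>)"] by (simp add: abs_mult)
  also have "\<dots> \<le> \<bar>r\<bar> * K * \<bar>a - b\<bar>"
    using assms by (intro mult_left_mono) (auto simp: abs_triangle_ineq3)
  finally show ?thesis .
qed

lemma rbg_choice_dense_subset_near_optimal:
  assumes K: "0 \<le> K" and G: "0 \<le> G"
    and c_nonneg: "\<And>t x. x \<in> F \<Longrightarrow> 0 \<le> c t x"
    and c_lipschitz: "\<And>t x y. x \<in> F \<Longrightarrow> y \<in> F \<Longrightarrow> \<bar>c t x - c t y\<bar> \<le> G * \<bar>x - y\<bar>"
    and SF: "S \<subseteq> F" and dense: "\<And>y. y \<in> F \<Longrightarrow> \<exists>y'\<in>S. \<bar>y - y'\<bar> \<le> \<delta>"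
    and x: "rbg_choice (\<lambda>z. K * \<bar>z\<bar>) c S r t x" and y: "y \<in> F"
  shows "work (\<lambda>z. K * \<bar>z\<bar>) c F (t - 1) x + r * (K * \<bar>x\<bar>)
           \<le> work (\<lambda>z. K * \<bar>z\<bar>) c F (t - 1) y + r * (K * \<bar>y\<bar>)
             + (2 * (real (t - 1) * (2*K + G)) + (1 + \<bar>r\<bar>) * K) * \<delta>"
proof -
  let ?WS = "work (\<lambda>z. K * \<bar>z\<bar>) c S (t - 1)" and ?WF = "work (\<lambda>z. K * \<bar>z\<bar>) c F (t - 1)"
  let ?D = "real (t - 1) * (2*K + G) * \<delta>"
  obtain y' where y': "y' \<in> S" "\<bar>y - y'\<bar> \<le> \<delta>" using dense[OF y] by blast
  have F: "F \<noteq> {}" and S: "S \<noteq> {}" using y y'(1) by blast+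
  have approx: "\<bar>?WS z - ?WF z\<bar> \<le> ?D" for z
    by (rule work_dense_subset_approx[where c=c, OF K G c_nonneg c_lipschitz SF S dense])
  have "?WF x + r * (K * \<bar>x\<bar>) \<le> ?WS x + r * (K * \<bar>x\<bar>) + ?D"
    using approx[of x] unfolding abs_le_iff by linarith
  also have "\<dots> \<le> ?WS y' + r * (K * \<bar>y'\<bar>) + ?D"
    using x y'(1) unfolding rbg_choice_def by auto
  also have "\<dots> \<le> ?WF y' + r * (K * \<bar>y'\<bar>) + 2 * ?D"
    using approx[of y'] unfolding abs_le_iff by linarith
  also have "\<dots> \<le> ?WF y + r * (K * \<bar>y\<bar>) + 2 * ?D + (1 + \<bar>r\<bar>) * K * \<bar>y - y'\<bar>"
  proof -
    have "?WF y' \<le> ?WF y + K * \<bar>y - y'\<bar>"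
      using work_lipschitz[where c=c and S=F and x=y' and x'=y, OF K c_nonneg F]
      by (simp add: abs_minus_commute)
    moreover have "r * (K * \<bar>y'\<bar>) - r * (K * \<bar>y\<bar>) \<le> \<bar>r\<bar> * K * \<bar>y' - y\<bar>"
      by (rule mult_abs_diff_le[OF K])
    ultimately show ?thesis by (simp add: algebra_simps abs_minus_commute)
  qed
  also have "\<dots> \<le> ?WF y + r * (K * \<bar>y\<bar>) + 2 * ?D + (1 + \<bar>r\<bar>) * K * \<delta>"
    using y'(2) K by (intro add_left_mono mult_left_mono) auto
  finally show ?thesis by (simp add: algebra_simps)
qed

lemma grid_subset:
  assumes "xL \<le> xH" and "2 \<le> m"
  shows "grid xL xH m \<subseteq> {xL..xH}"
proof
  fix z assume "z \<in> grid xL xH m"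
  then obtain k where k: "k < m" "z = xL + real k * grid_spacing xL xH m"
    unfolding grid_def by auto
  have "0 \<le> grid_spacing xL xH m" and "(real m - 1) * grid_spacing xL xH m = xH - xL"
    using assms by (auto simp: grid_spacing_def)
  moreover have "real k * grid_spacing xL xH m \<le> (real m - 1) * grid_spacing xL xH m"
    using k(1) \<open>0 \<le> grid_spacing xL xH m\<close> by (intro mult_right_mono) auto
  ultimately show "z \<in> {xL..xH}" using k(2) by auto
qed

lemma grid_dense:
  assumes "xL < xH" and "2 \<le> m" and y: "y \<in> {xL..xH}"
  shows "\<exists>y'\<in>grid xL xH m. \<bar>y - y'\<bar> \<le> grid_spacing xL xH m"
proof -
  define \<delta> where "\<delta> = grid_spacing xL xH m"
  have \<delta>: "0 < \<delta>" and m\<delta>: "(real m - 1) * \<delta> = xH - xL"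
    using assms by (auto simp: \<delta>_def grid_spacing_def)
  define k where "k = nat \<lfloor>(y - xL) / \<delta>\<rfloor>"
  have "0 \<le> (y - xL) / \<delta>" using y \<delta> by auto
  then have k: "real k \<le> (y - xL) / \<delta>" "(y - xL) / \<delta> < real k + 1"
    unfolding k_def by linarith+
  have "(y - xL) / \<delta> \<le> real m - 1"
    using y m\<delta> \<delta> by (simp add: pos_divide_le_eq)
  then have "k < m" using k by linarith
  then have "xL + real k * \<delta> \<in> grid xL xH m" unfolding grid_def \<delta>_def by auto
  moreover have "\<bar>y - (xL + real k * \<delta>)\<bar> \<le> \<delta>"
    using k \<delta> by (simp add: le_divide_eq divide_less_eq algebra_simps)
  ultimately show ?thesis unfolding \<delta>_def by blast
qed

lemma rbg_choice_antitone:
  assumes K: "0 < K" and S: "S \<subseteq> {0..}" and "r < r'"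
    and x: "rbg_choice (\<lambda>z. K * \<bar>z\<bar>) c S r t x" and x': "rbg_choice (\<lambda>z. K * \<bar>z\<bar>) c S r' t x'"
  shows "x' \<le> x"
proof -
  let ?W = "work (\<lambda>z. K * \<bar>z\<bar>) c S (t - 1)"
  have "x \<in> S" "x' \<in> S" using x x' unfolding rbg_choice_def by auto
  then have "?W x + r * (K * \<bar>x\<bar>) \<le> ?W x' + r * (K * \<bar>x'\<bar>)"
    and "?W x' + r' * (K * \<bar>x'\<bar>) \<le> ?W x + r' * (K * \<bar>x\<bar>)"
    using x x' unfolding rbg_choice_def by auto
  then have "(r' - r) * (K * (\<bar>x'\<bar> - \<bar>x\<bar>)) \<le> 0" by (simp add: algebra_simps)
  then have "\<bar>x'\<bar> \<le> \<bar>x\<bar>" using \<open>r < r'\<close> K by (simp add: mult_le_0_iff)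
  then show ?thesis using S \<open>x \<in> S\<close> \<open>x' \<in> S\<close> by auto
qed

lemma countable_multivalued_of_antitone:
  fixes P :: "real \<Rightarrow> real \<Rightarrow> bool"
  assumes antitone: "\<And>r r' x x'. r < r' \<Longrightarrow> P r x \<Longrightarrow> P r' x' \<Longrightarrow> x' \<le> x"
  shows "countable {r. \<exists>x y. x \<noteq> y \<and> P r x \<and> P r y}" (is "countable ?B")
proof -
  have "\<forall>r\<in>?B. \<exists>q. q \<in> \<rat> \<and> (\<exists>x y. x < q \<and> q < y \<and> P r x \<and> P r y)"
  proof
    fix r assume "r \<in> ?B"
    then obtain x y where "x < y" "P r x" "P r y" by (auto elim!: neqE)
    then show "\<exists>q. q \<in> \<rat> \<and> (\<exists>x y. x < q \<and> q < y \<and> P r x \<and> P r y)"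
      using Rats_dense_in_real[OF \<open>x < y\<close>] by blast
  qed
  from bchoice[OF this] obtain q
    where q: "\<forall>r\<in>?B. q r \<in> \<rat> \<and> (\<exists>x y. x < q r \<and> q r < y \<and> P r x \<and> P r y)"
    by blast
  have decreasing: "q r' < q r" if "r \<in> ?B" "r' \<in> ?B" "r < r'" for r r'
  proof -
    obtain x where x: "x < q r" "P r x" using q \<open>r \<in> ?B\<close> by blast
    obtain y' where y': "q r' < y'" "P r' y'" using q \<open>r' \<in> ?B\<close> by blast
    show ?thesis using antitone[OF \<open>r < r'\<close> x(2) y'(2)] x(1) y'(1) by linarith
  qed
  have "countable (q ` ?B)"
    using q countable_rat by (blast intro: countable_subset)
  moreover have "inj_on q ?B"
  proof (rule inj_onI)
    fix r r' assume "r \<in> ?B" "r' \<in> ?B" "q r = q r'"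
    then show "r = r'"
      using decreasing[of r r'] decreasing[of r' r] by (cases r r' rule: linorder_cases) auto
  qed
  ultimately show ?thesis by (rule countable_image_inj_on)
qed

lemma AE_rbg_choice_unique:
  assumes "0 < K" and "S \<subseteq> {0..}"
  shows "AE r in lborel. \<forall>t x y. rbg_choice (\<lambda>z. K * \<bar>z\<bar>) c S r t x
                                  \<longrightarrow> rbg_choice (\<lambda>z. K * \<bar>z\<bar>) c S r t y \<longrightarrow> x = y"
proof -
  define ties where "ties t = {r. \<exists>x y. x \<noteq> y \<and> rbg_choice (\<lambda>z. K * \<bar>z\<bar>) c S r t x
                                    \<and> rbg_choice (\<lambda>z. K * \<bar>z\<bar>) c S r t y}" for t
  have "countable (ties t)" for t
    unfolding ties_def
    by (rule countable_multivalued_of_antitone) (rule rbg_choice_antitone[OF assms])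
  then have "(\<Union>t. ties t) \<in> null_sets lborel"
    by (intro countable_imp_null_set_lborel) simp
  then show ?thesis
    by (rule AE_I') (auto simp: ties_def)
qed

lemma tendsto_unique_argmin:
  fixes Y :: "'a::metric_space \<Rightarrow> real"
  assumes "compact F" and "continuous_on F Y" and "xhat \<in> F"
    and unique_min: "\<And>x. x \<in> F \<Longrightarrow> x \<noteq> xhat \<Longrightarrow> Y xhat < Y x"
    and z: "\<And>i. z i \<in> F" and near_min: "\<And>i. Y (z i) \<le> Y xhat + e i" and "e \<longlonglongrightarrow> 0"
  shows "z \<longlonglongrightarrow> xhat"
proof (rule metric_LIMSEQ_I)
  fix \<epsilon> :: real assume "0 < \<epsilon>"
  define A where "A = F \<inter> {x. \<epsilon> \<le> dist x xhat}"
  show "\<exists>n0. \<forall>n\<ge>n0. dist (z n) xhat < \<epsilon>"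
  proof (cases "A = {}")
    case True
    then have "dist (z n) xhat < \<epsilon>" for n
      using z[of n] unfolding A_def by (metis IntI empty_iff mem_Collect_eq not_le)
    then show ?thesis by blast
  next
    case False
    have "compact A" unfolding A_def
      using \<open>compact F\<close> by (intro compact_Int_closed closed_Collect_le continuous_intros)
    moreover have "continuous_on A Y"
      using assms(2) by (rule continuous_on_subset) (auto simp: A_def)
    ultimately obtain a where a: "a \<in> A" "\<And>x. x \<in> A \<Longrightarrow> Y a \<le> Y x"
      using continuous_attains_inf[OF _ False] by blast
    have "Y xhat < Y a"
      using a(1) \<open>0 < \<epsilon>\<close> by (intro unique_min) (auto simp: A_def)
    then obtain n0 where n0: "\<And>n. n \<ge> n0 \<Longrightarrow> e n < Y a - Y xhat"
      using LIMSEQ_D[OF \<open>e \<longlonglongrightarrow> 0\<close>, of "Y a - Y xhat"] by (force simp: abs_less_iff)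
    have "dist (z n) xhat < \<epsilon>" if "n \<ge> n0" for n
    proof (rule ccontr)
      assume "\<not> dist (z n) xhat < \<epsilon>"
      then have "Y a \<le> Y (z n)" using z by (intro a(2)) (auto simp: A_def)
      then show False using near_min[of n] n0[OF that] by linarith
    qed
    then show ?thesis by blast
  qed
qed

lemma drbg_choice_tendsto_rbg_choice:
  assumes K: "0 \<le> K" and G: "0 \<le> G"
    and c_nonneg: "\<And>t x. x \<in> {xL..xH} \<Longrightarrow> 0 \<le> c t x"
    and c_lipschitz: "\<And>t x y. x \<in> {xL..xH} \<Longrightarrow> y \<in> {xL..xH} \<Longrightarrow> \<bar>c t x - c t y\<bar> \<le> G * \<bar>x - y\<bar>"
    and "xL < xH" and m: "\<And>i. 2 \<le> m i" and spacing: "(\<lambda>i. grid_spacing xL xH (m i)) \<longlonglongrightarrow> 0"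
    and xs: "\<And>i. rbg_choice (\<lambda>z. K * \<bar>z\<bar>) c (grid xL xH (m i)) r t (xs i)"
    and xhat: "rbg_choice (\<lambda>z. K * \<bar>z\<bar>) c {xL..xH} r t xhat"
    and unique: "\<And>x. rbg_choice (\<lambda>z. K * \<bar>z\<bar>) c {xL..xH} r t x \<Longrightarrow> x = xhat"
  shows "xs \<longlonglongrightarrow> xhat"
proof (rule tendsto_unique_argmin)
  let ?Y = "\<lambda>x. work (\<lambda>z. K * \<bar>z\<bar>) c {xL..xH} (t - 1) x + r * (K * \<bar>x\<bar>)"
  let ?C = "2 * (real (t - 1) * (2*K + G)) + (1 + \<bar>r\<bar>) * K"
  show "continuous_on {xL..xH} ?Y"
    using work_continuous_on[where c=c and S="{xL..xH}", OF K c_nonneg] \<open>xL < xH\<close>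
    by (auto intro!: continuous_intros)
  show "xhat \<in> {xL..xH}" using xhat unfolding rbg_choice_def by blast
  show "?Y xhat < ?Y x" if "x \<in> {xL..xH}" "x \<noteq> xhat" for x
  proof (rule ccontr)
    assume "\<not> ?Y xhat < ?Y x"
    then have "rbg_choice (\<lambda>z. K * \<bar>z\<bar>) c {xL..xH} r t x"
      using xhat that(1) unfolding rbg_choice_def by fastforce
    then show False using unique that(2) by blast
  qed
  have grid: "grid xL xH (m i) \<subseteq> {xL..xH}" for i
    using grid_subset[OF less_imp_le[OF \<open>xL < xH\<close>] m] .
  show "xs i \<in> {xL..xH}" for i
    using xs[of i] grid unfolding rbg_choice_def by blast
  show "?Y (xs i) \<le> ?Y xhat + ?C * grid_spacing xL xH (m i)" for i
    by (rule rbg_choice_dense_subset_near_optimal[OF K G c_nonneg c_lipschitz grid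
          grid_dense[OF \<open>xL < xH\<close> m] xs \<open>xhat \<in> {xL..xH}\<close>])
  show "(\<lambda>i. ?C * grid_spacing xL xH (m i)) \<longlonglongrightarrow> 0"
    using tendsto_mult_right_zero[OF spacing] by simp
qed (fact compact_Icc)

theorem lemma11:
  fixes xL xH \<theta> :: real and nrm :: "real \<Rightarrow> real" and c :: "nat \<Rightarrow> real \<Rightarrow> real"
    and m :: "nat \<Rightarrow> nat"
  assumes "0 \<le> xL" and "xL < xH"
    and "is_real_norm nrm" and "\<theta> \<ge> 1"
    and "\<And>t. convex_on {xL..xH} (c t)"
    and "\<And>t x. x \<in> {xL..xH} \<Longrightarrow> 0 \<le> c t x"
    and "unif_bounded_subgrad c {xL..xH}"
    and "\<And>i. m i \<ge> 2"
    and "(\<lambda>i. grid_spacing xL xH (m i)) \<longlonglongrightarrow> 0"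
  shows "AE r in uniform_measure lborel {-1<..<1}.
           \<forall>xs :: nat \<Rightarrow> nat \<Rightarrow> real. \<forall>xhat :: nat \<Rightarrow> real.
             (\<forall>i t. t \<ge> 1 \<longrightarrow> rbg_choice (\<lambda>x. \<theta> * nrm x) c (grid xL xH (m i)) r t (xs i t)) \<and>
             (\<forall>t. t \<ge> 1 \<longrightarrow> rbg_choice (\<lambda>x. \<theta> * nrm x) c {xL..xH} r t (xhat t))
             \<longrightarrow> (\<forall>t. t \<ge> 1 \<longrightarrow> (\<lambda>i. \<bar>xs i t - xhat t\<bar>) \<longlonglongrightarrow> 0)"
proof -
  define K where "K = \<theta> * nrm 1"
  have K: "0 < K" using real_norm_one_pos[OF assms(3)] assms(4) by (simp add: K_def)
  have N: "(\<lambda>x. \<theta> * nrm x) = (\<lambda>z. K * \<bar>z\<bar>)"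
  proof
    show "\<theta> * nrm x = K * \<bar>x\<bar>" for x
      using real_norm_eq_abs_mult[OF assms(3), of x] by (simp add: K_def)
  qed
  obtain G where G: "0 \<le> G" and c_lipschitz:
      "\<And>t x y. x \<in> {xL..xH} \<Longrightarrow> y \<in> {xL..xH} \<Longrightarrow> \<bar>c t x - c t y\<bar> \<le> G * \<bar>x - y\<bar>"
    using unif_bounded_subgrad_lipschitz[OF assms(7)] assms(2) by auto
  have "{xL..xH} \<subseteq> {0..}" using assms(1) by auto
  from AE_rbg_choice_unique[where c=c, OF K this]
  have "AE r in uniform_measure lborel {-1<..<1}. \<forall>t x y.
          rbg_choice (\<lambda>z. K * \<bar>z\<bar>) c {xL..xH} r t x \<longrightarrow> rbg_choice (\<lambda>z. K * \<bar>z\<bar>) c {xL..xH} r t y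
          \<longrightarrow> x = y"
    by (intro AE_uniform_measureI) (auto elim!: eventually_mono)
  then show ?thesis unfolding N
  proof eventually_elim
    case (elim r)
    show ?case
    proof (intro allI impI)
      fix xs :: "nat \<Rightarrow> nat \<Rightarrow> real" and xhat :: "nat \<Rightarrow> real" and t :: nat
      assume choices:
          "(\<forall>i t. 1 \<le> t \<longrightarrow> rbg_choice (\<lambda>z. K * \<bar>z\<bar>) c (grid xL xH (m i)) r t (xs i t)) \<and>
           (\<forall>t. 1 \<le> t \<longrightarrow> rbg_choice (\<lambda>z. K * \<bar>z\<bar>) c {xL..xH} r t (xhat t))"
        and "1 \<le> t"
      then have xhat: "rbg_choice (\<lambda>z. K * \<bar>z\<bar>) c {xL..xH} r t (xhat t)" by blast
      have "(\<lambda>i. xs i t) \<longlonglongrightarrow> xhat t"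
        using choices \<open>1 \<le> t\<close> elim
        by (intro drbg_choice_tendsto_rbg_choice[OF less_imp_le[OF K] G assms(6)
            c_lipschitz assms(2,8,9) _ xhat]) auto
      then show "(\<lambda>i. \<bar>xs i t - xhat t\<bar>) \<longlonglongrightarrow> 0"
        by (intro tendsto_rabs_zero LIM_zero)
    qed
  qed
qed

end
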